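(* Let $\ell\in\mathcal{D}^-[0,\infty)$, $r\in\mathcal{D}^+[0,\infty)$ with $\inf_{t\ge0}(r(t)-\ell(t))>0$, let $c_0,c_0'\in\mathbb{R}$ and $\psi,\psi'\in\mathcal{D}[0,\infty)$ with $\psi(0)=\psi'(0)$. Suppose $(\phi,\eta)$ and $(\phi',\eta')$ solve the SP on $[\ell(\cdot),r(\cdot)]$ for $c_0+\psi$ and $c_0'+\psi'$, respectively, with corresponding constraining processes $(\eta_\ell,\eta_r)$ and $(\eta_\ell',\eta_r')$. If there exists a non-decreasing function $\nu$ with $\nu(0)=0$ such that $\psi=\psi'+\nu$, then for each $t\ge0$: (1) $\eta_\ell(t)-[c_0'-c_0]^+\le\eta_\ell'(t)\le\eta_\ell(t)+\nu(t)+[c_0-c_0']^+$; (2) $\eta_r'(t)-[c_0'-c_0]^+\le\eta_r(t)\le\eta_r'(t)+\nu(t)+[c_0-c_0']^+$.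
   Context: $\mathcal{D}[0,\infty)$ denotes the càdlàg functions $[0,\infty)\to(-\infty,\infty)$; $\mathcal{D}^-[0,\infty)$ (resp. $\mathcal{D}^+[0,\infty)$) denotes càdlàg functions with values in $[-\infty,\infty)$ (resp. $(-\infty,\infty]$); $a^+=\max\{a,0\}$. SP: $(\phi,\eta)\in\mathcal{D}[0,\infty)^2$ solves the SP on $[\ell(\cdot),r(\cdot)]$ for $\psi$ if (1) $\phi(t)=\psi(t)+\eta(t)\in[\ell(t),r(t)]$ for all $t\ge0$; (2) $\eta=\eta_\ell-\eta_r$ with $\eta_\ell,\eta_r$ non-decreasing and $\int_0^\infty \mathbb{I}_{\{\phi(s)>\ell(s)\}}\,d\eta_\ell(s)=0$, $\int_0^\infty \mathbb{I}_{\{\phi(s)<r(s)\}}\,d\eta_r(s)=0$. The pair $(\eta_\ell,\eta_r)$ is called the pair of constraining processes associated with the SP. *)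

theory Defs
  imports "HOL-Analysis.Analysis"
begin

definition cadlag :: "(real \<Rightarrow> 'a::topological_space) \<Rightarrow> bool" where
  "cadlag f \<longleftrightarrow> (\<forall>t\<ge>0. continuous (at_right t) f) \<and>
                 (\<forall>t>0. \<exists>L. (f \<longlongrightarrow> L) (at_left t))"

definition D :: "(real \<Rightarrow> real) set" where
  "D = {f. cadlag f}"

definition D_minus :: "(real \<Rightarrow> ereal) set" where
  "D_minus = {f. cadlag f \<and> (\<forall>t\<ge>0. f t \<noteq> \<infinity>)}"

definition D_plus :: "(real \<Rightarrow> ereal) set" where
  "D_plus = {f. cadlag f \<and> (\<forall>t\<ge>0. f t \<noteq> -\<infinity>)}"

text \<open>Non-decreasing on [0,oo) with the convention f(0-) = 0, i.e. f(0) >= 0.\<close>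
definition nondecr0 :: "(real \<Rightarrow> real) \<Rightarrow> bool" where
  "nondecr0 f \<longleftrightarrow> 0 \<le> f 0 \<and> mono_on {0..} f"

text \<open>Lebesgue-Stieltjes measure d f on the real line, f extended by 0 to negative times
  (so that an atom of mass f(0) sits at 0).\<close>
definition LS_measure :: "(real \<Rightarrow> real) \<Rightarrow> real measure" where
  "LS_measure f = interval_measure (\<lambda>s. if s < 0 then 0 else f s)"

definition SP_sol ::
  "(real \<Rightarrow> ereal) \<Rightarrow> (real \<Rightarrow> ereal) \<Rightarrow> (real \<Rightarrow> real) \<Rightarrow> (real \<Rightarrow> real) \<Rightarrow> (real \<Rightarrow> real)
    \<Rightarrow> (real \<Rightarrow> real) \<Rightarrow> (real \<Rightarrow> real) \<Rightarrow> bool" where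
  "SP_sol l r psi phi eta etal etar \<longleftrightarrow>
     phi \<in> D \<and> eta \<in> D \<and>
     (\<forall>t\<ge>0. phi t = psi t + eta t \<and> l t \<le> ereal (phi t) \<and> ereal (phi t) \<le> r t) \<and>
     (\<forall>t\<ge>0. eta t = etal t - etar t) \<and>
     nondecr0 etal \<and> nondecr0 etar \<and> etal \<in> D \<and> etar \<in> D \<and>
     emeasure (LS_measure etal) {s. 0 \<le> s \<and> l s < ereal (phi s)} = 0 \<and>
     emeasure (LS_measure etar) {s. 0 \<le> s \<and> ereal (phi s) < r s} = 0"

end

theory Submission
  imports Defs
begin

text \<open>
  With \<open>x = [c0 - c0']\<^sup>+\<close> and \<open>y = [c0' - c0]\<^sup>+\<close>, put \<open>p = etal' - etal - nu - x\<close> and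
  \<open>q = etar' - etar - y\<close>. Then \<open>etal' - p\<close> and \<open>etar' - q\<close> are nonnegative and nondecreasing, and
  at times where \<open>etal'\<close> may increase (\<open>phi' = l \<le> phi\<close>) we have \<open>p \<le> q\<close>, while where \<open>etar'\<close> may
  increase (\<open>phi \<le> r = phi'\<close>) we have \<open>q \<le> p\<close>. Suppose \<open>p\<close> or \<open>q\<close> becomes positive and let
  \<open>T\<close> be the infimum of such times. Since \<open>l < r\<close> and all paths are right-continuous, \<open>phi'\<close> stays
  off one barrier, say the upper one, on some \<open>[T, T + e)\<close>; there \<open>etar'\<close> is flat, so \<open>q \<le> 0\<close>
  up to \<open>T + e\<close>, and then \<open>p \<le> q \<le> 0\<close> wherever \<open>etal'\<close> increases, so \<open>p \<le> 0\<close> as well,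
  contradicting the choice of \<open>T\<close>. The other two inequalities follow by exchanging the two
  solutions. The complementarity conditions are stated through Lebesgue-Stieltjes null sets, which
  are used via: if \<open>dG(N) = 0\<close>, then \<open>G u - G w\<close> is arbitrarily small for suitable \<open>w \<le> u\<close> outside \<open>N\<close>.
\<close>

lemma emeasure_interval_measure_Icc_LIMSEQ:
  fixes F :: "real \<Rightarrow> real"
  assumes mono: "mono F" and rc: "\<And>a. continuous (at_right a) F" and "a \<le> b"
  shows "(\<lambda>n. ennreal (F b - F (a - 1 / Suc n))) \<longlonglongrightarrow> emeasure (interval_measure F) {a..b}"
proof -
  let ?A = "\<lambda>n::nat. {a - 1 / Suc n<..b}"
  have A_eq: "emeasure (interval_measure F) (?A n) = ennreal (F b - F (a - 1 / Suc n))" for n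
  proof (rule emeasure_interval_measure_Ioc)
    show "a - 1 / Suc n \<le> b"
      using \<open>a \<le> b\<close> by (smt (verit) of_nat_0_le_iff divide_nonneg_nonneg)
  qed (use mono rc in \<open>auto dest: monoD\<close>)
  have "decseq ?A"
  proof (rule decseq_SucI)
    fix n :: nat
    have "1 / Suc (Suc n) \<le> 1 / Suc n"
      by (intro divide_left_mono) auto
    then show "?A (Suc n) \<subseteq> ?A n" by auto
  qed
  then have "(\<lambda>n. emeasure (interval_measure F) (?A n)) \<longlonglongrightarrow> emeasure (interval_measure F) (\<Inter>n. ?A n)"
    by (intro Lim_emeasure_decseq) (auto simp: A_eq simp del: of_nat_Suc)
  moreover have "(\<Inter>n. ?A n) = {a..b}"
  proof (intro equalityI subsetI)
    fix x assume "x \<in> (\<Inter>n. ?A n)"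
    then have x: "x \<in> ?A n" for n
      by (rule INT_D) simp
    have "a \<le> x"
    proof (rule field_le_epsilon)
      fix e :: real assume "0 < e"
      then obtain n where "1 / Suc n < e"
        by (metis nat_approx_posE of_nat_Suc add.commute)
      moreover have "a - 1 / Suc n < x"
        using x by simp
      ultimately show "a \<le> x + e" by linarith
    qed
    moreover have "x \<le> b"
      using x[of 0] by simp
    ultimately show "x \<in> {a..b}" by simp
  next
    fix x assume x: "x \<in> {a..b}"
    show "x \<in> (\<Inter>n. ?A n)"
    proof (rule INT_I)
      fix n :: nat
      have "a - 1 / Suc n < a"
        by simp
      with x show "x \<in> ?A n"
        unfolding greaterThanAtMost_iff atLeastAtMost_iff by linarith
    qed
  qed
  ultimately show ?thesis
    by (simp only: A_eq)
qed

lemma nonpos_if_le_increments_off_null_set: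
  fixes G :: "real \<Rightarrow> real"
  assumes mono: "mono G" and rc: "\<And>a. continuous (at_right a) G"
    and null: "emeasure (interval_measure G) N = 0" "N \<in> sets borel"
    and "v \<le> u" "v \<notin> N"
    and le_incr: "\<And>w. v \<le> w \<Longrightarrow> w \<le> u \<Longrightarrow> w \<notin> N \<Longrightarrow> z \<le> G u - G w"
  shows "z \<le> 0"
proof -
  have null_subset: "emeasure (interval_measure G) B = 0" if "B \<subseteq> N" for B
    using emeasure_mono[OF that] null by (metis le_zero_eq sets_interval_measure)
  define S where "S = {v..u} - N"
  define \<sigma> where "\<sigma> = Sup S"
  have "v \<in> S"
    using assms(5,6) by (simp add: S_def)
  then have S_ne: "S \<noteq> {}" and bdd: "bdd_above S"
    by (auto simp: S_def bdd_above_def)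
  have le_\<sigma>: "w \<le> \<sigma>" if "w \<in> S" for w
    unfolding \<sigma>_def using that bdd by (rule cSup_upper)
  have \<sigma>_le: "\<sigma> \<le> u"
    unfolding \<sigma>_def using S_ne by (rule cSup_least) (auto simp: S_def)
  have "v \<le> \<sigma>"
    using le_\<sigma> \<open>v \<in> S\<close> .
  have "{\<sigma><..u} \<subseteq> N"
  proof
    fix w assume "w \<in> {\<sigma><..u}"
    then show "w \<in> N"
      using le_\<sigma>[of w] \<open>v \<le> \<sigma>\<close> by (auto simp: S_def)
  qed
  then have "ennreal (G u - G \<sigma>) = 0"
    using null_subset emeasure_interval_measure_Ioc[OF \<sigma>_le monoD[OF mono] rc] by simp
  then have "G u \<le> G \<sigma>"
    by (simp add: ennreal_eq_0_iff)
  show ?thesis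
  proof (cases "\<sigma> \<in> S")
    case True
    with le_incr \<open>G u \<le> G \<sigma>\<close> show ?thesis
      by (fastforce simp: S_def)
  next
    case False
    \<comment> \<open>then \<open>[\<sigma>, u]\<close> is null, so \<open>G u\<close> is the left limit of \<open>G\<close> at \<open>\<sigma>\<close>, which is approached from within \<open>S\<close>\<close>
    with \<open>v \<le> \<sigma>\<close> \<sigma>_le have "\<sigma> \<in> N"
      by (simp add: S_def)
    with \<open>{\<sigma><..u} \<subseteq> N\<close> have "{\<sigma>..u} \<subseteq> N"
      by (metis atLeastAtMost_iff greaterThanAtMost_iff order_le_less subsetD subsetI)
    then have lim: "(\<lambda>n. ennreal (G u - G (\<sigma> - 1 / Suc n))) \<longlonglongrightarrow> 0"
      using emeasure_interval_measure_Icc_LIMSEQ[OF mono rc \<sigma>_le] null_subset by simp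
    have "ennreal z \<le> ennreal (G u - G (\<sigma> - 1 / Suc n))" for n
    proof -
      obtain w where w: "w \<in> S" "\<sigma> - 1 / Suc n < w"
        using less_cSup_iff[OF S_ne bdd, of "\<sigma> - 1 / Suc n"] by (auto simp: \<sigma>_def)
      then have "z \<le> G u - G w"
        using le_incr by (auto simp: S_def)
      also have "\<dots> \<le> G u - G (\<sigma> - 1 / Suc n)"
        using monoD[OF mono, of "\<sigma> - 1 / Suc n" w] w(2) by simp
      finally show ?thesis
        by (rule ennreal_leI)
    qed
    then have "ennreal z \<le> 0"
      by (intro tendsto_lowerbound[OF lim]) auto
    then show ?thesis
      by (simp add: ennreal_eq_0_iff)
  qed
qed

lemma mono_zero_extension:
  assumes "nondecr0 f"
  shows "mono (\<lambda>s. if s < 0 then 0 else f s)"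
proof (rule monoI)
  fix x y :: real assume "x \<le> y"
  have f0: "0 \<le> f 0" and mono: "mono_on {0..} f"
    using assms by (auto simp: nondecr0_def)
  consider "y < 0" | "x < 0" "0 \<le> y" | "0 \<le> x"
    using \<open>x \<le> y\<close> by linarith
  then show "(if x < 0 then 0 else f x) \<le> (if y < 0 then 0 else f y)"
  proof cases
    case 2
    then show ?thesis using f0 mono_onD[OF mono, of 0 y] by simp
  next
    case 3
    then show ?thesis using mono_onD[OF mono, of x y] \<open>x \<le> y\<close> by simp
  qed (use \<open>x \<le> y\<close> in simp)
qed

lemma continuous_at_right_zero_extension:
  fixes f :: "real \<Rightarrow> 'a::{zero,topological_space}"
  assumes "\<And>t. 0 \<le> t \<Longrightarrow> continuous (at_right t) f"
  shows "continuous (at_right a) (\<lambda>s. if s < 0 then 0 else f s)"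
proof (cases "a < 0")
  case True
  have "eventually (\<lambda>s. s < 0) (at_right a)"
    using True by (auto simp: eventually_at_right_field intro: exI[of _ 0])
  then have "eventually (\<lambda>s. (if s < 0 then 0 else f s) = (if a < 0 then 0 else f a)) (at_right a)"
    by eventually_elim (use True in auto)
  then show ?thesis
    unfolding continuous_within by (rule tendsto_eventually)
next
  case False
  have "eventually (\<lambda>s. f s = (if s < 0 then 0 else f s)) (at_right a)"
    using eventually_at_right_less[of a] by eventually_elim (use False in auto)
  moreover have "(f \<longlongrightarrow> f a) (at_right a)"
    using assms False unfolding continuous_within by simp
  ultimately show ?thesis
    unfolding continuous_within using False by (simp add: tendsto_cong)
qed

lemma nonpos_if_le_increments_off_LS_null_set:
  fixes f :: "real \<Rightarrow> real"
  assumes "nondecr0 f" and rc: "\<And>t. 0 \<le> t \<Longrightarrow> continuous (at_right t) f"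
    and null: "emeasure (LS_measure f) N = 0" "N \<in> sets borel"
    and "0 \<le> u" and "z \<le> f u"
    and le_incr: "\<And>w. 0 \<le> w \<Longrightarrow> w \<le> u \<Longrightarrow> w \<notin> N \<Longrightarrow> z \<le> f u - f w"
  shows "z \<le> 0"
proof -
  let ?G = "\<lambda>s. if s < 0 then 0 else f s"
  \<comment> \<open>the atom at \<open>0\<close> is caught by comparing with the time \<open>-1\<close>, where the extension vanishes\<close>
  have "emeasure (interval_measure ?G) (N \<inter> {0..}) \<le> emeasure (interval_measure ?G) N"
    using null(2) by (intro emeasure_mono) auto
  then have null': "emeasure (interval_measure ?G) (N \<inter> {0..}) = 0"
    using null(1) unfolding LS_measure_def by simp
  show ?thesis
  proof (rule nonpos_if_le_increments_off_null_set[OF _ _ null', where v = "-1" and u = u])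
    show "mono ?G"
      using \<open>nondecr0 f\<close> by (rule mono_zero_extension)
    show "continuous (at_right a) ?G" for a
      using rc by (rule continuous_at_right_zero_extension)
    show "N \<inter> {0..} \<in> sets borel"
      using null(2) by simp
    fix w assume "-1 \<le> w" "w \<le> u" "w \<notin> N \<inter> {0..}"
    then show "z \<le> ?G u - ?G w"
      using le_incr[of w] \<open>0 \<le> u\<close> \<open>z \<le> f u\<close> by (cases "w < 0") auto
  qed (use \<open>0 \<le> u\<close> in simp_all)
qed

definition right_open :: "real set \<Rightarrow> bool" where
  "right_open U \<longleftrightarrow> (\<forall>s\<in>U. \<exists>e>0. {s..<s + e} \<subseteq> U)"

lemma right_open_imp_borel:
  assumes "right_open U"
  shows "U \<in> sets borel"
proof -
  define C where "C = U - interior U"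
  \<comment> \<open>each point of \<open>C\<close> is the left end of an interval in \<open>interior U\<close>; these intervals are disjoint\<close>
  have "\<exists>q. q \<in> \<rat> \<and> s < q \<and> {s<..<q} \<subseteq> interior U" if "s \<in> C" for s
  proof -
    obtain e where "e > 0" "{s..<s + e} \<subseteq> U"
      using assms \<open>s \<in> C\<close> by (auto simp: right_open_def C_def)
    moreover obtain q where "q \<in> \<rat>" "s < q" "q < s + e"
      using Rats_dense_in_real[of s "s + e"] \<open>e > 0\<close> by auto
    ultimately have "{s<..<q} \<subseteq> interior U"
      by (intro interior_maximal) auto
    with \<open>q \<in> \<rat>\<close> \<open>s < q\<close> show ?thesis by blast
  qed
  then obtain g where g: "\<And>s. s \<in> C \<Longrightarrow> g s \<in> \<rat> \<and> s < g s \<and> {s<..<g s} \<subseteq> interior U"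
    by metis
  have "inj_on g C"
  proof (rule inj_onI)
    have not_between: "\<not> (s < s' \<and> s' < g s)" if "s \<in> C" "s' \<in> C" for s s'
      using g[OF that(1)] that(2) by (auto simp: C_def)
    fix s s' assume "s \<in> C" "s' \<in> C" "g s = g s'"
    with not_between[of s s'] not_between[of s' s] g[of s] g[of s'] show "s = s'"
      by (smt (verit))
  qed
  moreover have "g ` C \<subseteq> \<rat>"
    using g by auto
  ultimately have "countable C"
    by (metis countable_image_inj_on countable_rat countable_subset)
  then have "C \<in> sets borel"
    by (rule sets.countable[rotated]) simp
  moreover have "interior U \<in> sets borel"
    by simp
  moreover have "U = interior U \<union> C"
    using interior_subset by (auto simp: C_def)
  ultimately show ?thesis
    by (metis sets.Un)
qed

lemma right_open_less:
  fixes f g :: "real \<Rightarrow> 'a::{linorder_topology,dense_linorder}"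
  assumes "\<And>s. 0 \<le> s \<Longrightarrow> continuous (at_right s) f"
    and "\<And>s. 0 \<le> s \<Longrightarrow> continuous (at_right s) g"
  shows "right_open {s. 0 \<le> s \<and> f s < g s}"
  unfolding right_open_def
proof
  fix s assume s: "s \<in> {s. 0 \<le> s \<and> f s < g s}"
  then obtain c where c: "f s < c" "c < g s"
    using dense by auto
  have "eventually (\<lambda>x. f x < c) (at_right s)" "eventually (\<lambda>x. c < g x) (at_right s)"
    using assms[of s] s c unfolding continuous_within by (auto intro: order_tendstoD)
  then have "eventually (\<lambda>x. f x < g x) (at_right s)"
    by eventually_elim auto
  then obtain b where "s < b" and b: "\<And>x. s < x \<Longrightarrow> x < b \<Longrightarrow> f x < g x"
    unfolding eventually_at_right_field by auto
  have "{s..<s + (b - s)} \<subseteq> {s. 0 \<le> s \<and> f s < g s}"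
  proof
    fix x assume "x \<in> {s..<s + (b - s)}"
    then consider "x = s" | "s < x" "x < b"
      by fastforce
    then show "x \<in> {s. 0 \<le> s \<and> f s < g s}"
      by cases (use s b in auto)
  qed
  with \<open>s < b\<close> show "\<exists>e>0. {s..<s + e} \<subseteq> {s. 0 \<le> s \<and> f s < g s}"
    by (intro exI[of _ "b - s"]) auto
qed

lemma nondecr0_diffD:
  fixes f p :: "real \<Rightarrow> real"
  assumes "nondecr0 (\<lambda>t. f t - p t)" and "0 \<le> w" "w \<le> u"
  shows "p u - p w \<le> f u - f w" and "p u \<le> f u"
proof -
  have mono: "mono_on {0..} (\<lambda>t. f t - p t)" and "0 \<le> f 0 - p 0"
    using assms(1) by (auto simp: nondecr0_def)
  show "p u - p w \<le> f u - f w"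
    using mono_onD[OF mono, of w u] assms(2,3) by simp
  show "p u \<le> f u"
    using mono_onD[OF mono, of 0 u] assms(2,3) \<open>0 \<le> f 0 - p 0\<close> by simp
qed

lemma dominated_pair_nonpos_step:
  fixes f g p q :: "real \<Rightarrow> real"
  assumes f: "nondecr0 f" "\<And>t. 0 \<le> t \<Longrightarrow> continuous (at_right t) f"
      "emeasure (LS_measure f) M = 0" "M \<in> sets borel"
    and g: "nondecr0 g" "\<And>t. 0 \<le> t \<Longrightarrow> continuous (at_right t) g"
      "emeasure (LS_measure g) N = 0" "N \<in> sets borel"
    and fp: "nondecr0 (\<lambda>t. f t - p t)" and gq: "nondecr0 (\<lambda>t. g t - q t)"
    and p_le_q: "\<And>s. 0 \<le> s \<Longrightarrow> s \<notin> M \<Longrightarrow> p s \<le> q s"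
    and "0 \<le> T" and flat: "{T..<T + e} \<subseteq> N"
    and before: "\<And>w. 0 \<le> w \<Longrightarrow> w < T \<Longrightarrow> p w \<le> 0 \<and> q w \<le> 0"
    and "T \<le> u" "u < T + e"
  shows "p u \<le> 0 \<and> q u \<le> 0"
proof -
  have q_nonpos: "q v \<le> 0" if "0 \<le> v" "v < T + e" for v
  proof (cases "v < T")
    case True
    with before \<open>0 \<le> v\<close> show ?thesis by blast
  next
    case False
    show ?thesis
    proof (rule nonpos_if_le_increments_off_LS_null_set[OF g \<open>0 \<le> v\<close>])
      show "q v \<le> g v"
        using nondecr0_diffD(2)[OF gq \<open>0 \<le> v\<close> order_refl] .
      fix w assume w: "0 \<le> w" "w \<le> v" "w \<notin> N"
      with flat \<open>v < T + e\<close> have "w < T"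
        by (meson atLeastLessThan_iff not_less order_le_less_trans subsetD)
      with before w have "q w \<le> 0" by blast
      with nondecr0_diffD(1)[OF gq w(1,2)] show "q v \<le> g v - g w" by simp
    qed
  qed
  have "0 \<le> u"
    using \<open>0 \<le> T\<close> \<open>T \<le> u\<close> by simp
  have "p u \<le> 0"
  proof (rule nonpos_if_le_increments_off_LS_null_set[OF f \<open>0 \<le> u\<close>])
    show "p u \<le> f u"
      using nondecr0_diffD(2)[OF fp \<open>0 \<le> u\<close> order_refl] .
    fix w assume w: "0 \<le> w" "w \<le> u" "w \<notin> M"
    then have "p w \<le> 0"
      using p_le_q[of w] q_nonpos[of w] \<open>u < T + e\<close> by simp
    with nondecr0_diffD(1)[OF fp w(1,2)] show "p u \<le> f u - f w" by simp
  qed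
  with q_nonpos[OF \<open>0 \<le> u\<close> \<open>u < T + e\<close>] show ?thesis by simp
qed

lemma dominated_pair_nonpos:
  fixes f g p q :: "real \<Rightarrow> real"
  assumes f: "nondecr0 f" "\<And>t. 0 \<le> t \<Longrightarrow> continuous (at_right t) f"
      "emeasure (LS_measure f) M = 0" "right_open M"
    and g: "nondecr0 g" "\<And>t. 0 \<le> t \<Longrightarrow> continuous (at_right t) g"
      "emeasure (LS_measure g) N = 0" "right_open N"
    and cover: "{0..} \<subseteq> M \<union> N"
    and fp: "nondecr0 (\<lambda>t. f t - p t)" and gq: "nondecr0 (\<lambda>t. g t - q t)"
    and p_le_q: "\<And>s. 0 \<le> s \<Longrightarrow> s \<notin> M \<Longrightarrow> p s \<le> q s"
    and q_le_p: "\<And>s. 0 \<le> s \<Longrightarrow> s \<notin> N \<Longrightarrow> q s \<le> p s"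
    and "0 \<le> u"
  shows "p u \<le> 0 \<and> q u \<le> 0"
proof (rule ccontr)
  define B where "B = {v. 0 \<le> v \<and> \<not> (p v \<le> 0 \<and> q v \<le> 0)}"
  define T where "T = Inf B"
  assume "\<not> (p u \<le> 0 \<and> q u \<le> 0)"
  with \<open>0 \<le> u\<close> have B_ne: "B \<noteq> {}"
    by (auto simp: B_def)
  have bdd: "bdd_below B"
    by (auto simp: B_def bdd_below_def)
  have "0 \<le> T"
    unfolding T_def using B_ne by (rule cInf_greatest) (auto simp: B_def)
  have before: "p w \<le> 0 \<and> q w \<le> 0" if "0 \<le> w" "w < T" for w
    using cInf_lower[OF _ bdd, of w] that by (force simp: B_def T_def)
  have borel: "M \<in> sets borel" "N \<in> sets borel"
    using f(4) g(4) by (simp_all add: right_open_imp_borel)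
  obtain e where "e > 0" and "{T..<T + e} \<subseteq> M \<or> {T..<T + e} \<subseteq> N"
    using cover \<open>0 \<le> T\<close> f(4) g(4) unfolding right_open_def by blast
  then have good: "p v \<le> 0 \<and> q v \<le> 0" if "T \<le> v" "v < T + e" for v
  proof (elim disjE)
    assume "{T..<T + e} \<subseteq> M"
    from dominated_pair_nonpos_step[OF g(1-3) borel(2) f(1-3) borel(1) gq fp q_le_p \<open>0 \<le> T\<close> this]
    show ?thesis using before that by blast
  next
    assume "{T..<T + e} \<subseteq> N"
    from dominated_pair_nonpos_step[OF f(1-3) borel(1) g(1-3) borel(2) fp gq p_le_q \<open>0 \<le> T\<close> this]
    show ?thesis using before that by blast
  qed
  obtain v where "v \<in> B" "v < T + e"
    using cInf_less_iff[OF B_ne bdd, of "T + e"] \<open>e > 0\<close> by (auto simp: T_def)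
  moreover have "T \<le> v"
    unfolding T_def using \<open>v \<in> B\<close> bdd by (rule cInf_lower)
  ultimately show False
    using good by (auto simp: B_def)
qed

lemma nondecr0_add:
  assumes "nondecr0 f" "nondecr0 g"
  shows "nondecr0 (\<lambda>t. f t + g t)"
  using assms unfolding nondecr0_def mono_on_def by (auto intro: add_mono)

lemma less_if_INF_diff_pos:
  fixes l r :: "'a \<Rightarrow> ereal"
  assumes "(INF t\<in>A. r t - l t) > 0" "t \<in> A" "l t \<noteq> \<infinity>" "r t \<noteq> -\<infinity>"
  shows "l t < r t"
proof -
  have "0 < r t - l t"
    using assms(1) INF_lower[OF assms(2), of "\<lambda>t. r t - l t"] by simp
  with assms(3,4) show ?thesis
    by (cases "l t"; cases "r t") auto
qed

lemma SP_sol_right_open_slack: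
  assumes "l \<in> D_minus" "r \<in> D_plus" "SP_sol l r chi phi eta etal etar"
  shows "right_open {s. 0 \<le> s \<and> l s < ereal (phi s)}"
    and "right_open {s. 0 \<le> s \<and> ereal (phi s) < r s}"
proof -
  have "continuous (at_right s) l" "continuous (at_right s) r" if "0 \<le> s" for s
    using assms(1,2) that by (auto simp: D_minus_def D_plus_def cadlag_def)
  moreover have "continuous (at_right s) (\<lambda>s. ereal (phi s))" if "0 \<le> s" for s
    using assms(3) that unfolding SP_sol_def D_def cadlag_def continuous_within
    by (auto intro: tendsto_ereal)
  ultimately show "right_open {s. 0 \<le> s \<and> l s < ereal (phi s)}"
    and "right_open {s. 0 \<le> s \<and> ereal (phi s) < r s}"
    by (auto intro!: right_open_less)
qed

lemma SP_sol_compare: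
  fixes l r :: "real \<Rightarrow> ereal"
    and chi chi' alpha beta phi eta etal etar phi' eta' etal' etar' :: "real \<Rightarrow> real"
  assumes "l \<in> D_minus" and "r \<in> D_plus" and l_less_r: "\<And>t. 0 \<le> t \<Longrightarrow> l t < r t"
    and sol: "SP_sol l r chi phi eta etal etar" and sol': "SP_sol l r chi' phi' eta' etal' etar'"
    and "nondecr0 alpha" "nondecr0 beta"
    and diff: "\<And>t. 0 \<le> t \<Longrightarrow> chi t - chi' t = alpha t - beta t"
    and "0 \<le> t"
  shows "etal' t \<le> etal t + alpha t \<and> etar' t \<le> etar t + beta t"
proof -
  have eq: "phi s = chi s + etal s - etar s" "phi' s = chi' s + etal' s - etar' s"
    and bounds: "l s \<le> phi s" "phi s \<le> r s" "l s \<le> phi' s" "phi' s \<le> r s" if "0 \<le> s" for s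
    using sol sol' that unfolding SP_sol_def by auto
  have "etal' t - etal t - alpha t \<le> 0 \<and> etar' t - etar t - beta t \<le> 0"
  proof (rule dominated_pair_nonpos[where M = "{s. 0 \<le> s \<and> l s < ereal (phi' s)}"
        and N = "{s. 0 \<le> s \<and> ereal (phi' s) < r s}"
        and p = "\<lambda>s. etal' s - etal s - alpha s" and q = "\<lambda>s. etar' s - etar s - beta s"])
    show "nondecr0 etal'" "nondecr0 etar'"
      "emeasure (LS_measure etal') {s. 0 \<le> s \<and> l s < ereal (phi' s)} = 0"
      "emeasure (LS_measure etar') {s. 0 \<le> s \<and> ereal (phi' s) < r s} = 0"
      using sol' by (simp_all add: SP_sol_def)
    show "continuous (at_right s) etal'" "continuous (at_right s) etar'" if "0 \<le> s" for s
      using sol' that by (simp_all add: SP_sol_def D_def cadlag_def)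
    show "right_open {s. 0 \<le> s \<and> l s < ereal (phi' s)}"
      "right_open {s. 0 \<le> s \<and> ereal (phi' s) < r s}"
      using SP_sol_right_open_slack[OF assms(1,2) sol'] .
    show "{0..} \<subseteq> {s. 0 \<le> s \<and> l s < ereal (phi' s)} \<union> {s. 0 \<le> s \<and> ereal (phi' s) < r s}"
      using l_less_r bounds(3,4) by (force simp: not_less intro: order.strict_trans1)
    show "nondecr0 (\<lambda>s. etal' s - (etal' s - etal s - alpha s))"
      "nondecr0 (\<lambda>s. etar' s - (etar' s - etar s - beta s))"
      using sol \<open>nondecr0 alpha\<close> \<open>nondecr0 beta\<close> by (simp_all add: SP_sol_def nondecr0_add)
  next
    fix s assume "0 \<le> s" "s \<notin> {s. 0 \<le> s \<and> l s < ereal (phi' s)}"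
    then have "ereal (phi' s) \<le> l s"
      by (simp add: not_less)
    also have "l s \<le> ereal (phi s)"
      using bounds(1)[OF \<open>0 \<le> s\<close>] .
    finally have "phi' s \<le> phi s"
      by simp
    then show "etal' s - etal s - alpha s \<le> etar' s - etar s - beta s"
      using eq[OF \<open>0 \<le> s\<close>] diff[OF \<open>0 \<le> s\<close>] by simp
  next
    fix s assume "0 \<le> s" "s \<notin> {s. 0 \<le> s \<and> ereal (phi' s) < r s}"
    have "ereal (phi s) \<le> r s"
      using bounds(2)[OF \<open>0 \<le> s\<close>] .
    also have "r s \<le> ereal (phi' s)"
      using \<open>s \<notin> _\<close> \<open>0 \<le> s\<close> by (simp add: not_less)
    finally have "phi s \<le> phi' s"
      by simp
    then show "etar' s - etar s - beta s \<le> etal' s - etal s - alpha s"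
      using eq[OF \<open>0 \<le> s\<close>] diff[OF \<open>0 \<le> s\<close>] by simp
  qed (rule \<open>0 \<le> t\<close>)
  then show ?thesis
    by simp
qed

theorem proposition3p5:
  fixes l r :: "real \<Rightarrow> ereal"
    and c0 c0' :: real
    and psi psi' phi eta etal etar phi' eta' etal' etar' nu :: "real \<Rightarrow> real"
  assumes "l \<in> D_minus" and "r \<in> D_plus"
    and "(INF t\<in>{0..}. r t - l t) > 0"
    and "psi \<in> D" and "psi' \<in> D" and "psi 0 = psi' 0"
    and "SP_sol l r (\<lambda>t. c0 + psi t) phi eta etal etar"
    and "SP_sol l r (\<lambda>t. c0' + psi' t) phi' eta' etal' etar'"
    and "mono_on {0..} nu" and "nu 0 = 0"
    and "\<forall>t\<ge>0. psi t = psi' t + nu t"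
  shows "\<forall>t\<ge>0.
     (etal t - max (c0' - c0) 0 \<le> etal' t \<and> etal' t \<le> etal t + nu t + max (c0 - c0') 0) \<and>
     (etar' t - max (c0' - c0) 0 \<le> etar t \<and> etar t \<le> etar' t + nu t + max (c0 - c0') 0)"
proof (intro allI impI)
  fix t :: real assume "0 \<le> t"
  define x where "x = max (c0 - c0') 0"
  define y where "y = max (c0' - c0) 0"
  have l_less_r: "l s < r s" if "0 \<le> s" for s
    using assms(1,2) that by (intro less_if_INF_diff_pos[OF assms(3)]) (auto simp: D_minus_def D_plus_def)
  have nu_x: "nondecr0 (\<lambda>s. nu s + x)"
    using assms(9,10) by (intro nondecr0_add) (auto simp: nondecr0_def mono_on_def x_def)
  have y: "nondecr0 (\<lambda>_. y)"
    by (simp add: nondecr0_def mono_on_def y_def)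
  have "etal' t \<le> etal t + (nu t + x) \<and> etar' t \<le> etar t + y"
    using assms(11) by (intro SP_sol_compare[OF assms(1,2) l_less_r assms(7,8) nu_x y _ \<open>0 \<le> t\<close>])
      (auto simp: x_def y_def)
  moreover have "etal t \<le> etal' t + y \<and> etar t \<le> etar' t + (nu t + x)"
    using assms(11) by (intro SP_sol_compare[OF assms(1,2) l_less_r assms(8,7) y nu_x _ \<open>0 \<le> t\<close>])
      (auto simp: x_def y_def)
  ultimately show "(etal t - y \<le> etal' t \<and> etal' t \<le> etal t + nu t + x) \<and>
     (etar' t - y \<le> etar t \<and> etar t \<le> etar' t + nu t + x)"
    by simp
qed

end
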